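(* Let $G$ be a connected chordal graph. Then there exists a spanning cactus subgraph of $G$ with the maximum possible number of edges (among all spanning cactus subgraphs of $G$) in which every cycle has length $3$.
   Context: All graphs are finite, simple and undirected. A graph is chordal if it has no induced cycle of length greater than $3$. A cactus is a connected graph in which every edge lies in at most one cycle. A spanning cactus subgraph of $G$ is a subgraph of $G$ with vertex set $V(G)$ that is a cactus. *)

theory Defs
  imports Main
begin

definition graph :: "'a set \<Rightarrow> 'a set set \<Rightarrow> bool" where
  "graph V E \<longleftrightarrow> finite V \<and> (\<forall>e\<in>E. \<exists>x y. x \<noteq> y \<and> x \<in> V \<and> y \<in> V \<and> e = {x, y})"

definition connected_graph :: "'a set \<Rightarrow> 'a set set \<Rightarrow> bool" where
  "connected_graph V E \<longleftrightarrow> (\<forall>u\<in>V. \<forall>v\<in>V. (u, v) \<in> {(x, y). {x, y} \<in> E}\<^sup>*)"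

definition cycle_edges :: "'a list \<Rightarrow> 'a set set" where
  "cycle_edges c = {{c ! i, c ! ((i + 1) mod length c)} | i. i < length c}"

definition is_cycle :: "'a set \<Rightarrow> 'a set set \<Rightarrow> 'a list \<Rightarrow> bool" where
  "is_cycle V E c \<longleftrightarrow> 3 \<le> length c \<and> distinct c \<and> set c \<subseteq> V \<and> cycle_edges c \<subseteq> E"

definition induced_cycle :: "'a set \<Rightarrow> 'a set set \<Rightarrow> 'a list \<Rightarrow> bool" where
  "induced_cycle V E c \<longleftrightarrow> is_cycle V E c \<and>
     (\<forall>x\<in>set c. \<forall>y\<in>set c. {x, y} \<in> E \<longrightarrow> {x, y} \<in> cycle_edges c)"

definition chordal :: "'a set \<Rightarrow> 'a set set \<Rightarrow> bool" where
  "chordal V E \<longleftrightarrow> (\<forall>c. induced_cycle V E c \<longrightarrow> length c \<le> 3)"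

definition cactus :: "'a set \<Rightarrow> 'a set set \<Rightarrow> bool" where
  "cactus V E \<longleftrightarrow> graph V E \<and> connected_graph V E \<and>
     (\<forall>e\<in>E. \<forall>c1 c2. is_cycle V E c1 \<and> is_cycle V E c2 \<and> e \<in> cycle_edges c1 \<and> e \<in> cycle_edges c2
        \<longrightarrow> cycle_edges c1 = cycle_edges c2)"

definition spanning_cactus :: "'a set \<Rightarrow> 'a set set \<Rightarrow> 'a set set \<Rightarrow> bool" where
  "spanning_cactus V E F \<longleftrightarrow> F \<subseteq> E \<and> cactus V F"

end

theory Submission
  imports Defs
begin

text \<open>Among the spanning cacti with the most edges choose one, \<open>F\<close>, with the fewest edges on
  cycles of length at least four. Such a cycle \<open>C\<close> of \<open>F\<close> is a cycle of the chordal graph, so it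
  has a chord \<open>{a, x}\<close> skipping a single vertex \<open>b\<close> of \<open>C\<close>. Replacing the edge \<open>{a, b}\<close> of \<open>F\<close>
  by \<open>{a, x}\<close> gives a spanning cactus with as many edges, in which \<open>C\<close> has become the shorter
  cycle \<open>a x \<dots>\<close> and \<open>b\<close> hangs off it by \<open>{b, x}\<close>. It loses \<open>{a, b}\<close> and \<open>{b, x}\<close> from
  the long cycles and gains at most \<open>{a, x}\<close>, contradicting the choice of \<open>F\<close>.\<close>

section \<open>Paths and cycles as vertex lists\<close>

fun path_edges :: "'a list \<Rightarrow> 'a set set" where
  "path_edges [] = {}"
| "path_edges [x] = {}"
| "path_edges (x # y # xs) = insert {x, y} (path_edges (y # xs))"

lemma path_edges_Cons: "path_edges (x # xs) = (if xs = [] then {} else insert {x, hd xs} (path_edges xs))"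
  by (cases xs) auto

lemma path_edges_snoc:
  "path_edges (xs @ [y]) = (if xs = [] then {} else insert {last xs, y} (path_edges xs))"
  by (induction xs rule: path_edges.induct) auto

lemma path_edges_append_Cons: "path_edges (xs @ y # ys) = path_edges (xs @ [y]) \<union> path_edges (y # ys)"
  by (induction xs rule: path_edges.induct) auto

lemma path_edges_subset_set: "e \<in> path_edges xs \<Longrightarrow> e \<subseteq> set xs"
  by (induction xs rule: path_edges.induct) auto

lemma path_edges_rev: "path_edges (rev xs) = path_edges xs"
proof (induction xs)
  case (Cons x xs)
  then show ?case
    by (cases "xs = []") (simp_all add: path_edges_snoc path_edges_Cons last_rev insert_commute)
qed simp

lemma path_edges_conv_nth: "path_edges xs = {{xs ! i, xs ! (i + 1)} | i. i + 1 < length xs}"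
proof (induction xs rule: path_edges.induct)
  case (3 x y xs)
  let ?l = "x # y # xs"
  show ?case
  proof (rule set_eqI, rule iffI)
    fix e assume "e \<in> path_edges ?l"
    then consider "e = {x, y}" | "e \<in> path_edges (y # xs)" by auto
    then show "e \<in> {{?l ! i, ?l ! (i + 1)} | i. i + 1 < length ?l}"
    proof cases
      case 2
      then obtain i where "e = {(y # xs) ! i, (y # xs) ! (i + 1)}" "i + 1 < length (y # xs)"
        using 3 by blast
      then show ?thesis by (intro CollectI exI[of _ "Suc i"]) simp
    qed (intro CollectI exI[of _ 0], simp)
  next
    fix e assume "e \<in> {{?l ! i, ?l ! (i + 1)} | i. i + 1 < length ?l}"
    then obtain i where i: "e = {?l ! i, ?l ! (i + 1)}" "i + 1 < length ?l" by blast
    show "e \<in> path_edges ?l"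
    proof (cases i)
      case (Suc j)
      then have "e \<in> path_edges (y # xs)" using 3 i by auto
      then show ?thesis by simp
    qed (use i in simp)
  qed
qed auto

lemma cycle_edges_conv_path_edges:
  assumes "c \<noteq> []"
  shows "cycle_edges c = path_edges (c @ [hd c])"
proof -
  have "{c ! i, c ! ((i + 1) mod length c)} = {(c @ [hd c]) ! i, (c @ [hd c]) ! (i + 1)}"
    if "i < length c" for i
  proof (cases "i + 1 < length c")
    case False
    then have "i + 1 = length c" using that by simp
    then show ?thesis using assms by (simp add: nth_append hd_conv_nth)
  qed (simp add: nth_append)
  then show ?thesis
    unfolding cycle_edges_def path_edges_conv_nth by (auto intro!: Collect_cong)
qed

lemma cycle_edges_Cons_Cons: "cycle_edges (u # v # q) = insert {u, v} (path_edges (v # q @ [u]))"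
  by (simp add: cycle_edges_conv_path_edges)

lemma cycle_edges_conv_snoc: "c \<noteq> [] \<Longrightarrow> cycle_edges c = insert {last c, hd c} (path_edges c)"
  by (simp add: cycle_edges_conv_path_edges path_edges_snoc)

lemma cycle_edges_rotate1: "cycle_edges (rotate1 c) = cycle_edges c"
proof (cases "length c \<le> 1")
  case True
  then show ?thesis by (cases c) auto
next
  case False
  then obtain x xs where c: "c = x # xs" and "xs \<noteq> []" by (cases c) auto
  then have "cycle_edges (rotate1 c) = path_edges (xs @ [x, hd xs])"
    by (simp add: cycle_edges_conv_path_edges)
  also have "\<dots> = insert {x, hd xs} (path_edges (xs @ [x]))"
    by (subst path_edges_append_Cons) (simp add: insert_commute)
  also have "\<dots> = cycle_edges c"
    using c \<open>xs \<noteq> []\<close> by (simp add: cycle_edges_conv_path_edges path_edges_Cons)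
  finally show ?thesis .
qed

lemma cycle_edges_rotate: "cycle_edges (rotate k c) = cycle_edges c"
  by (induction k) (auto simp: cycle_edges_rotate1)

lemma cycle_edges_rev: "cycle_edges (rev c) = cycle_edges c"
proof (cases "c = []")
  case False
  have "path_edges (rev c @ [last c]) = path_edges (rev (last c # c))" by simp
  also have "\<dots> = path_edges (c @ [hd c])"
    using False by (simp only: path_edges_rev) (simp add: path_edges_Cons path_edges_snoc)
  finally show ?thesis using False by (simp add: cycle_edges_conv_path_edges hd_rev)
qed simp

lemma is_cycle_rotate: "is_cycle V F c \<Longrightarrow> is_cycle V F (rotate k c)"
  by (simp add: is_cycle_def cycle_edges_rotate)

lemma is_cycle_rev: "is_cycle V F c \<Longrightarrow> is_cycle V F (rev c)"
  by (simp add: is_cycle_def cycle_edges_rev)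

lemma nth_in_cycle_edges: "i < length c \<Longrightarrow> {c ! i, c ! ((i + 1) mod length c)} \<in> cycle_edges c"
  by (auto simp: cycle_edges_def)

lemma cycle_edges_subset_set: "e \<in> cycle_edges c \<Longrightarrow> e \<subseteq> set c"
  by (auto simp: cycle_edges_def intro!: nth_mem mod_less_divisor)

lemma closing_edge_notin_path_edges:
  assumes "distinct (u # v # q)" "q \<noteq> []"
  shows "{u, v} \<notin> path_edges (v # q @ [u])"
proof
  assume "{u, v} \<in> path_edges (v # q @ [u])"
  moreover have "{u, v} \<noteq> {v, hd q}"
    using assms hd_in_set[OF assms(2)] by (auto simp: doubleton_eq_iff)
  ultimately have "{u, v} \<in> path_edges (q @ [u])"
    using assms(2) by (simp add: path_edges_Cons)
  then show False
    using path_edges_subset_set assms(1) by fastforce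
qed

lemma is_cycle_starting_with_edge:
  assumes "is_cycle V F c" "{u, v} \<in> cycle_edges c"
  shows "\<exists>q. is_cycle V F (u # v # q) \<and> cycle_edges (u # v # q) = cycle_edges c"
proof -
  obtain i where i: "i < length c" "{u, v} = {c ! i, c ! ((i + 1) mod length c)}"
    using assms(2) by (auto simp: cycle_edges_def)
  have n3: "3 \<le> length c" using assms(1) by (simp add: is_cycle_def)
  then obtain y0 y1 q where r: "rotate i c = y0 # y1 # q"
    by (metis Suc_le_length_iff length_rotate numeral_3_eq_3)
  have "y0 = c ! i" "y1 = c ! ((i + 1) mod length c)"
    using nth_rotate[of 0 c i] nth_rotate[of 1 c i] r i(1) n3
    by (simp_all add: add.commute, fastforce)
  then have uv: "(u = y0 \<and> v = y1) \<or> (u = y1 \<and> v = y0)"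
    using i(2) by (auto simp: doubleton_eq_iff)
  have c1: "is_cycle V F (y0 # y1 # q)" "cycle_edges (y0 # y1 # q) = cycle_edges c"
    using r is_cycle_rotate[OF assms(1), of i] cycle_edges_rotate[of i c] by simp_all
  have "rotate (length q) (rev (y0 # y1 # q)) = y1 # y0 # rev q"
    using rotate_append[of "rev q" "[y1, y0]"] by simp
  then have "is_cycle V F (y1 # y0 # rev q) \<and> cycle_edges (y1 # y0 # rev q) = cycle_edges c"
    using c1 is_cycle_rotate is_cycle_rev cycle_edges_rotate cycle_edges_rev by metis
  with uv c1 show ?thesis by blast
qed

section \<open>Connectivity and spanning cacti\<close>

lemma path_edges_rtrancl:
  "path_edges xs \<subseteq> F \<Longrightarrow> xs \<noteq> [] \<Longrightarrow> (hd xs, last xs) \<in> {(x, y). {x, y} \<in> F}\<^sup>*"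
proof (induction xs rule: path_edges.induct)
  case (3 x y xs)
  then have "(y, last (y # xs)) \<in> {(x, y). {x, y} \<in> F}\<^sup>*" by simp
  moreover have "(x, y) \<in> {(x, y). {x, y} \<in> F}" using 3 by simp
  ultimately show ?case by (simp add: converse_rtrancl_into_rtrancl)
qed auto

lemma connected_graph_if_edges_reachable:
  assumes "connected_graph V F"
    and "\<And>x y. {x, y} \<in> F \<Longrightarrow> (x, y) \<in> {(x, y). {x, y} \<in> F'}\<^sup>*"
  shows "connected_graph V F'"
proof -
  have "{(x, y). {x, y} \<in> F} \<subseteq> {(x, y). {x, y} \<in> F'}\<^sup>*" using assms(2) by auto
  then have "{(x, y). {x, y} \<in> F}\<^sup>* \<subseteq> {(x, y). {x, y} \<in> F'}\<^sup>*"
    by (rule rtrancl_subset_rtrancl)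
  then show ?thesis using assms(1) unfolding connected_graph_def by blast
qed

lemma connected_graph_Diff_cycle_edge:
  assumes "is_cycle V F (u # v # q)" "connected_graph V F"
  shows "connected_graph V (F - {{u, v}})"
proof -
  let ?R = "{(x, y). {x, y} \<in> F - {{u, v}}}\<^sup>*"
  have "distinct (u # v # q)" "q \<noteq> []" using assms(1) by (auto simp: is_cycle_def)
  then have path: "path_edges (v # q @ [u]) \<subseteq> F - {{u, v}}"
    using assms(1) closing_edge_notin_path_edges[of u v q]
    by (auto simp: is_cycle_def cycle_edges_Cons_Cons)
  have "(v, u) \<in> ?R"
    using path_edges_rtrancl[OF path] by simp
  moreover have "(u, v) \<in> ?R"
  proof -
    have "path_edges (rev (v # q @ [u])) \<subseteq> F - {{u, v}}" using path by (simp only: path_edges_rev)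
    from path_edges_rtrancl[OF this] show ?thesis by (simp add: hd_rev last_rev)
  qed
  ultimately have "(x, y) \<in> ?R" if "{x, y} \<in> F" for x y
    using that by (cases "{x, y} = {u, v}") (auto simp: doubleton_eq_iff)
  then show ?thesis by (rule connected_graph_if_edges_reachable[OF assms(2)])
qed

lemma graph_finite_edges:
  assumes "graph V E"
  shows "finite E"
proof -
  have "E \<subseteq> Pow V" "finite V" using assms by (auto simp: graph_def)
  then show ?thesis by (meson finite_Pow_iff finite_subset)
qed

lemma graph_subset: "graph V E \<Longrightarrow> F \<subseteq> E \<Longrightarrow> graph V F"
  by (auto simp: graph_def)

text \<open>A connected spanning subgraph with fewest edges has no cycle, so it is a cactus.\<close>

lemma spanning_cactus_exists:
  assumes "graph V E" "connected_graph V E"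
  shows "\<exists>F. spanning_cactus V E F"
proof -
  obtain T where T: "T \<subseteq> E" "connected_graph V T"
    and min: "\<And>T'. T' \<subseteq> E \<and> connected_graph V T' \<Longrightarrow> card T \<le> card T'"
    using ex_has_least_nat[of "\<lambda>T. T \<subseteq> E \<and> connected_graph V T" E card] assms(2) by blast
  have "finite T" using graph_finite_edges[OF assms(1)] T(1) finite_subset by blast
  have acyclic: "\<not> is_cycle V T c" for c
  proof
    assume c: "is_cycle V T c"
    then have "{c ! 0, c ! ((0 + 1) mod length c)} \<in> cycle_edges c"
      by (intro nth_in_cycle_edges) (auto simp: is_cycle_def)
    then obtain u v q where uvq: "is_cycle V T (u # v # q)"
      using is_cycle_starting_with_edge[OF c] by blast
    then have "{u, v} \<in> T" by (auto simp: is_cycle_def cycle_edges_Cons_Cons)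
    then have "card (T - {{u, v}}) < card T" by (rule card_Diff1_less[OF \<open>finite T\<close>])
    moreover have "card T \<le> card (T - {{u, v}})"
      using min connected_graph_Diff_cycle_edge[OF uvq T(2)] T(1) by blast
    ultimately show False by simp
  qed
  then have "cactus V T"
    unfolding cactus_def using graph_subset[OF assms(1) T(1)] T(2) by blast
  then show ?thesis using T(1) by (auto simp: spanning_cactus_def)
qed

lemma cactus_cycle_edges_eq:
  assumes "cactus V F" "e \<in> F" "is_cycle V F c1" "is_cycle V F c2"
    "e \<in> cycle_edges c1" "e \<in> cycle_edges c2"
  shows "cycle_edges c1 = cycle_edges c2"
  using assms unfolding cactus_def by blast

section \<open>Short chords in chordal graphs\<close>

lemma cycle_chord_indices:
  assumes "graph V E" "is_cycle V E c" "i < length c" "j < length c"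
    and "{c ! i, c ! j} \<in> E" "{c ! i, c ! j} \<notin> cycle_edges c"
  obtains i' j' where "i' < j'" "j' < length c" "2 \<le> j' - i'" "j' - i' + 2 \<le> length c"
    "{c ! i', c ! j'} = {c ! i, c ! j}"
proof -
  let ?n = "length c"
  have "i \<noteq> j"
    using assms(1,5) unfolding graph_def by (force simp: doubleton_eq_iff)
  define i' where "i' = min i j"
  define j' where "j' = max i j"
  have eq: "{c ! i', c ! j'} = {c ! i, c ! j}"
    unfolding i'_def j'_def by (cases "i \<le> j") (auto simp: min_def max_def insert_commute)
  have lt: "i' < j'" "j' < ?n" using \<open>i \<noteq> j\<close> assms(3,4) unfolding i'_def j'_def by auto
  have chord: "{c ! i', c ! j'} \<notin> cycle_edges c" using assms(6) eq by simp
  have "2 \<le> j' - i'"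
  proof (rule ccontr)
    assume "\<not> 2 \<le> j' - i'"
    then have "j' = (i' + 1) mod ?n" using lt by auto
    then show False using nth_in_cycle_edges[of i' c] lt chord by simp
  qed
  moreover have "j' - i' + 2 \<le> ?n"
  proof (rule ccontr)
    assume "\<not> j' - i' + 2 \<le> ?n"
    then have "i' = (j' + 1) mod ?n" using lt by (auto simp: mod_if)
    then show False using nth_in_cycle_edges[of j' c] lt chord by (simp add: insert_commute)
  qed
  ultimately show thesis using that lt eq by blast
qed

lemma is_cycle_chord_subcycle:
  assumes c: "is_cycle V E c" and ij: "i < j" "j < length c" "2 \<le> j - i"
    and chord: "{c ! i, c ! j} \<in> E"
  shows "is_cycle V E (take (j - i + 1) (drop i c))"
proof -
  define d where "d = take (j - i + 1) (drop i c)"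
  have len: "length d = j - i + 1" unfolding d_def using ij by auto
  have nth_d: "k < length d \<Longrightarrow> d ! k = c ! (i + k)" for k
    unfolding d_def using ij by auto
  have "cycle_edges d \<subseteq> E"
  proof
    fix e assume "e \<in> cycle_edges d"
    then obtain k where k: "k < length d" "e = {d ! k, d ! ((k + 1) mod length d)}"
      unfolding cycle_edges_def by blast
    show "e \<in> E"
    proof (cases "k + 1 < length d")
      case True
      then have "e = {c ! (i + k), c ! ((i + k + 1) mod length c)}"
        using k nth_d len ij by auto
      moreover have "i + k < length c" using k len ij by auto
      ultimately show ?thesis
        using c nth_in_cycle_edges[of "i + k" c] by (auto simp: is_cycle_def)
    next
      case False
      then have "k = j - i" "k + 1 = length d" using k(1) len by auto
      then have "e = {c ! j, c ! i}" using k nth_d len ij(1) by simp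
      then show ?thesis using chord by (simp add: insert_commute)
    qed
  qed
  moreover have "distinct d" "set d \<subseteq> V"
    unfolding d_def using c by (auto simp: is_cycle_def dest: in_set_takeD in_set_dropD)
  ultimately show ?thesis
    using len ij unfolding d_def is_cycle_def by simp
qed

text \<open>Take a chord spanning the fewest steps of the cycle. If it spanned three or more, the cycle it
  closes with the arc it spans would have length at least four, and a chord of that cycle would
  span fewer steps.\<close>

lemma chordal_cycle_short_chord:
  assumes g: "graph V E" and ch: "chordal V E" and c: "is_cycle V E c" and len: "4 \<le> length c"
  obtains i where "i + 2 < length c" "{c ! i, c ! (i + 2)} \<in> E"
proof -
  let ?n = "length c"
  define chord where "chord = (\<lambda>(i, j). i < j \<and> j < ?n \<and> 2 \<le> j - i \<and> j - i + 2 \<le> ?n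
      \<and> {c ! i, c ! j} \<in> E)"
  have chord_in_subcycle: "\<exists>i' j'. chord (i', j') \<and> j' - i' < j - i"
    if "chord (i, j)" "3 \<le> j - i" for i j
  proof -
    define d where "d = take (j - i + 1) (drop i c)"
    have ij: "i < j" "j < ?n" "{c ! i, c ! j} \<in> E" "j - i + 2 \<le> ?n"
      using that unfolding chord_def by auto
    have d: "is_cycle V E d"
      unfolding d_def using is_cycle_chord_subcycle[OF c ij(1,2)] that(2) ij(3) by simp
    have len_d: "length d = j - i + 1" and nth_d: "k < length d \<Longrightarrow> d ! k = c ! (i + k)" for k
      unfolding d_def using ij by auto
    have "\<not> induced_cycle V E d" using ch len_d that(2) unfolding chordal_def by fastforce
    then obtain p q where pq: "p < length d" "q < length d" "{d ! p, d ! q} \<in> E"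
      "{d ! p, d ! q} \<notin> cycle_edges d"
      using d unfolding induced_cycle_def by (auto simp: in_set_conv_nth)
    obtain p' q' where "p' < q'" "q' < length d" "2 \<le> q' - p'" "q' - p' + 2 \<le> length d"
      "{d ! p', d ! q'} = {d ! p, d ! q}"
      using cycle_chord_indices[OF g d pq] .
    then have "chord (i + p', i + q')" "(i + q') - (i + p') < j - i"
      using pq(3) nth_d[of p'] nth_d[of q'] ij len_d unfolding chord_def by auto
    then show ?thesis by blast
  qed
  have "\<not> induced_cycle V E c" using ch len unfolding chordal_def by fastforce
  then obtain i0 j0 where "i0 < ?n" "j0 < ?n" "{c ! i0, c ! j0} \<in> E" "{c ! i0, c ! j0} \<notin> cycle_edges c"
    using c unfolding induced_cycle_def by (auto simp: in_set_conv_nth)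
  then obtain i1 j1 where "i1 < j1" "j1 < ?n" "2 \<le> j1 - i1" "j1 - i1 + 2 \<le> ?n"
    "{c ! i1, c ! j1} = {c ! i0, c ! j0}"
    using cycle_chord_indices[OF g c] by blast
  then have "chord (i1, j1)" using \<open>{c ! i0, c ! j0} \<in> E\<close> unfolding chord_def by simp
  then obtain p where p: "chord p" and min: "\<And>p'. chord p' \<Longrightarrow> snd p - fst p \<le> snd p' - fst p'"
    using ex_has_least_nat[of chord "(i1, j1)" "\<lambda>p. snd p - fst p"] by blast
  obtain i j where ij: "p = (i, j)" by fastforce
  have "j - i = 2"
  proof (rule ccontr)
    assume "j - i \<noteq> 2"
    then have "3 \<le> j - i" using p ij unfolding chord_def by auto
    then obtain i' j' where "chord (i', j')" "j' - i' < j - i"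
      using chord_in_subcycle p ij by blast
    then show False using min[of "(i', j')"] ij by simp
  qed
  moreover have "i < j" "j < ?n" "{c ! i, c ! j} \<in> E" using p ij unfolding chord_def by auto
  ultimately have "j = i + 2" by simp
  then show thesis using that \<open>j < ?n\<close> \<open>{c ! i, c ! j} \<in> E\<close> by blast
qed

section \<open>Exchanging a cycle edge for a chord\<close>

definition long_cycle_edges :: "'a set \<Rightarrow> 'a set set \<Rightarrow> 'a set set" where
  "long_cycle_edges V F = {e \<in> F. \<exists>c. is_cycle V F c \<and> 4 \<le> length c \<and> e \<in> cycle_edges c}"

locale cactus_chord_exchange =
  fixes V :: "'a set" and E F :: "'a set set" and a b x :: 'a and r :: "'a list"
  assumes graph: "graph V E" and cactus: "cactus V F" and F_subset: "F \<subseteq> E"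
    and cycle: "is_cycle V F (a # b # x # r)" and r_nonempty: "r \<noteq> []" and chord: "{a, x} \<in> E"
begin

definition F' :: "'a set set" where
  "F' = insert {a, x} (F - {{a, b}})"

definition rest :: "'a set set" where
  "rest = path_edges (x # r @ [a])"

lemma distinct_cycle: "a \<noteq> b" "a \<noteq> x" "b \<noteq> x" "a \<notin> set r" "b \<notin> set r" "x \<notin> set r"
  using cycle by (auto simp: is_cycle_def)

lemma cycle_edges_cycle: "cycle_edges (a # b # x # r) = insert {a, b} (insert {b, x} rest)"
  unfolding rest_def by (simp add: cycle_edges_Cons_Cons)

lemma cycle_edges_in_F: "{a, b} \<in> F" "{b, x} \<in> F" "rest \<subseteq> F"
  using cycle cycle_edges_cycle by (auto simp: is_cycle_def)

lemma b_notin_rest: "e \<in> rest \<Longrightarrow> b \<notin> e"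
  using path_edges_subset_set[of e "x # r @ [a]"] distinct_cycle unfolding rest_def by auto

lemma finite_F: "finite F"
  using graph_finite_edges[OF graph] F_subset finite_subset by blast

lemma cycle_edges_eq_cycle:
  assumes "e \<in> cycle_edges (a # b # x # r)" "is_cycle V F d" "e \<in> cycle_edges d"
  shows "cycle_edges d = cycle_edges (a # b # x # r)"
  using cactus_cycle_edges_eq[OF cactus _ assms(2) cycle] assms cycle by (auto simp: is_cycle_def)

lemma F_cycle_through_edge_at_b_contains_a_x:
  assumes "is_cycle V F d" "e \<in> {{a, b}, {b, x}}" "e \<in> cycle_edges d"
  shows "a \<in> set d" "x \<in> set d"
proof -
  have "cycle_edges d = cycle_edges (a # b # x # r)"
    using cycle_edges_eq_cycle assms cycle_edges_cycle by auto
  then have "{a, b} \<in> cycle_edges d" "{b, x} \<in> cycle_edges d" using cycle_edges_cycle by auto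
  then show "a \<in> set d" "x \<in> set d" using cycle_edges_subset_set by blast+
qed

lemma chord_notin_F: "{a, x} \<notin> F"
proof
  assume "{a, x} \<in> F"
  then have "is_cycle V F [a, b, x]"
    using distinct_cycle cycle cycle_edges_in_F
    by (auto simp: is_cycle_def cycle_edges_Cons_Cons insert_commute)
  then have "cycle_edges [a, b, x] = cycle_edges (a # b # x # r)"
    using cycle_edges_eq_cycle[of "{a, b}" "[a, b, x]"]
    by (simp add: cycle_edges_cycle cycle_edges_Cons_Cons)
  moreover have "{x, hd r} \<in> cycle_edges (a # b # x # r)"
    using r_nonempty by (simp add: cycle_edges_cycle rest_def path_edges_Cons)
  ultimately have "{x, hd r} \<in> cycle_edges [a, b, x]" by simp
  then have "hd r \<in> {a, b, x}" using cycle_edges_subset_set by fastforce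
  then show False using hd_in_set[OF r_nonempty] distinct_cycle by auto
qed

lemma ab_notin_F': "{a, b} \<notin> F'"
  unfolding F'_def using distinct_cycle by (auto simp: doubleton_eq_iff)

lemma F'_subset: "F' \<subseteq> E"
  unfolding F'_def using F_subset chord by auto

lemma card_F': "card F' = card F"
  unfolding F'_def using finite_F chord_notin_F cycle_edges_in_F(1)
  by (simp add: card_Diff_singleton) (metis Suc_pred card_gt_0_iff empty_iff)

lemma is_cycle_F_if_F'_avoiding_chord: "is_cycle V F' d \<Longrightarrow> {a, x} \<notin> cycle_edges d \<Longrightarrow> is_cycle V F d"
  unfolding is_cycle_def F'_def by blast

lemma b_notin_F'_cycle_through_chord:
  assumes d: "is_cycle V F' (a # x # q)"
  shows "b \<notin> set q"
proof
  assume "b \<in> set q"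
  then obtain q1 q2 where q: "q = q1 @ b # q2" by (meson split_list)
  have dist: "distinct (a # x # q)" and "q \<noteq> []" and V: "set (a # x # q) \<subseteq> V"
    using d by (auto simp: is_cycle_def)
  have path_F: "path_edges (x # q @ [a]) \<subseteq> F"
    using d closing_edge_notin_path_edges[OF dist \<open>q \<noteq> []\<close>] unfolding F'_def
    by (auto simp: is_cycle_def cycle_edges_Cons_Cons)
  have "path_edges (x # q @ [a]) = path_edges (x # q1 @ [b]) \<union> path_edges (b # q2 @ [a])"
    using path_edges_append_Cons[of "x # q1" b "q2 @ [a]"] q by simp
  then have paths: "path_edges (x # q1 @ [b]) \<subseteq> F" "path_edges (b # q2 @ [a]) \<subseteq> F"
    using path_F by auto
  show False
  proof (cases "q1 = []")
    case q1: True
    show False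
    proof (cases "q2 = []")
      case True
      then have "{b, a} \<in> F'" using d q q1 by (auto simp: is_cycle_def cycle_edges_Cons_Cons)
      then show False using ab_notin_F' by (simp add: insert_commute)
    next
      case False
      let ?D = "b # q2 @ [a]"
      have "is_cycle V F ?D" "{a, b} \<in> cycle_edges ?D"
        using cycle_edges_conv_snoc[of ?D] dist V q q1 False paths(2) cycle_edges_in_F(1)
        by (auto simp: is_cycle_def Suc_le_eq)
      then have "x \<in> set ?D" by (intro F_cycle_through_edge_at_b_contains_a_x) simp_all
      then show False using dist q q1 by auto
    qed
  next
    case False
    let ?D = "x # q1 @ [b]"
    have "is_cycle V F ?D" "{b, x} \<in> cycle_edges ?D"
      using cycle_edges_conv_snoc[of ?D] dist V q False paths(1) cycle_edges_in_F(2)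
      by (auto simp: is_cycle_def Suc_le_eq insert_commute)
    then have "a \<in> set ?D" by (intro F_cycle_through_edge_at_b_contains_a_x) simp_all
    then show False using dist q by auto
  qed
qed

text \<open>Closing such a cycle through \<open>b\<close> instead of the chord gives a cycle of \<open>F\<close> sharing
  \<open>{a, b}\<close> with the original one.\<close>

lemma cycle_edges_F'_cycle_through_chord:
  assumes d: "is_cycle V F' d" "{a, x} \<in> cycle_edges d"
  shows "cycle_edges d = insert {a, x} rest"
proof -
  obtain q where q: "is_cycle V F' (a # x # q)" "cycle_edges (a # x # q) = cycle_edges d"
    using is_cycle_starting_with_edge[OF d] by blast
  define rest_q where "rest_q = path_edges (x # q @ [a])"
  have dist: "distinct (a # x # q)" and "q \<noteq> []" and V: "set (a # x # q) \<subseteq> V"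
    using q(1) by (auto simp: is_cycle_def)
  have edges_q: "cycle_edges (a # x # q) = insert {a, x} rest_q"
    unfolding rest_q_def by (simp add: cycle_edges_Cons_Cons)
  have "{a, x} \<notin> rest_q"
    unfolding rest_q_def by (rule closing_edge_notin_path_edges[OF dist \<open>q \<noteq> []\<close>])
  then have rest_q_F: "rest_q \<subseteq> F"
    using q(1) edges_q unfolding F'_def by (auto simp: is_cycle_def)
  have b: "b \<notin> set q" by (rule b_notin_F'_cycle_through_chord[OF q(1)])
  let ?D = "a # b # x # q"
  have edges_D: "cycle_edges ?D = insert {a, b} (insert {b, x} rest_q)"
    unfolding rest_q_def by (simp add: cycle_edges_Cons_Cons)
  have "is_cycle V F ?D"
    using dist b distinct_cycle V cycle cycle_edges_in_F rest_q_F edges_D by (auto simp: is_cycle_def)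
  then have eq: "insert {a, b} (insert {b, x} rest_q) = insert {a, b} (insert {b, x} rest)"
    using cycle_edges_eq_cycle[of "{a, b}"] edges_D cycle_edges_cycle by simp
  have "e \<in> rest_q \<Longrightarrow> b \<notin> e" for e
    using path_edges_subset_set[of e "x # q @ [a]"] distinct_cycle b unfolding rest_q_def by auto
  then have "rest_q = insert {a, b} (insert {b, x} rest_q) - {{a, b}, {b, x}}" by auto
  also have "\<dots> = rest" unfolding eq using b_notin_rest by auto
  finally have "rest_q = rest" .
  then show ?thesis using q(2) edges_q by simp
qed

lemma cycle_edges_subset_long_cycle_edges: "cycle_edges (a # b # x # r) \<subseteq> long_cycle_edges V F"
proof -
  have "4 \<le> length (a # b # x # r)" using r_nonempty by (cases r) auto
  then show ?thesis using cycle unfolding long_cycle_edges_def is_cycle_def by blast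
qed

lemma F'_cycles_through_and_avoiding_chord_disjoint:
  assumes d1: "is_cycle V F' d1" "{a, x} \<in> cycle_edges d1"
    and d2: "is_cycle V F' d2" "{a, x} \<notin> cycle_edges d2"
  shows "cycle_edges d1 \<inter> cycle_edges d2 = {}"
proof (rule ccontr)
  assume "cycle_edges d1 \<inter> cycle_edges d2 \<noteq> {}"
  then obtain e where e: "e \<in> cycle_edges d1" "e \<in> cycle_edges d2" by blast
  then have "e \<in> rest"
    using cycle_edges_F'_cycle_through_chord[OF d1] d2(2) by auto
  then have "cycle_edges d2 = cycle_edges (a # b # x # r)"
    using cycle_edges_eq_cycle is_cycle_F_if_F'_avoiding_chord[OF d2] e(2) cycle_edges_cycle by blast
  then have "{a, b} \<in> F'"
    using d2(1) cycle_edges_cycle by (auto simp: is_cycle_def)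
  then show False using ab_notin_F' by contradiction
qed

lemma connected_F': "connected_graph V F'"
proof (rule connected_graph_if_edges_reachable)
  show "connected_graph V F" using cactus by (simp add: cactus_def)
next
  let ?R = "{(u, v). {u, v} \<in> F'}"
  have "{a, x} \<in> F'" "{x, b} \<in> F'"
    unfolding F'_def using cycle_edges_in_F(2) distinct_cycle
    by (auto simp: insert_commute doubleton_eq_iff)
  then have "(a, b) \<in> ?R\<^sup>*" "(b, a) \<in> ?R\<^sup>*"
    by (auto simp: insert_commute intro: rtrancl_into_rtrancl)
  moreover fix u v assume "{u, v} \<in> F"
  ultimately show "(u, v) \<in> ?R\<^sup>*"
    unfolding F'_def by (cases "{u, v} = {a, b}") (auto simp: doubleton_eq_iff)
qed

lemma cactus_F': "cactus V F'"
  unfolding cactus_def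
proof (intro conjI ballI allI impI)
  show "graph V F'" using graph_subset[OF graph F'_subset] .
  show "connected_graph V F'" by (rule connected_F')
next
  fix e d1 d2
  assume "e \<in> F'" and d: "is_cycle V F' d1 \<and> is_cycle V F' d2 \<and> e \<in> cycle_edges d1 \<and> e \<in> cycle_edges d2"
  show "cycle_edges d1 = cycle_edges d2"
  proof (cases "{a, x} \<in> cycle_edges d1 \<longleftrightarrow> {a, x} \<in> cycle_edges d2")
    case True
    show ?thesis
    proof (cases "{a, x} \<in> cycle_edges d1")
      case True
      then show ?thesis
        using d \<open>{a, x} \<in> cycle_edges d1 \<longleftrightarrow> {a, x} \<in> cycle_edges d2\<close>
          cycle_edges_F'_cycle_through_chord by metis
    next
      case False
      then have "is_cycle V F d1" "is_cycle V F d2"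
        using d True is_cycle_F_if_F'_avoiding_chord by blast+
      moreover have "e \<in> F" using \<open>is_cycle V F d1\<close> d by (auto simp: is_cycle_def)
      ultimately show ?thesis using cactus_cycle_edges_eq[OF cactus] d by blast
    qed
  next
    case False
    then have "cycle_edges d1 \<inter> cycle_edges d2 = {}"
      using d F'_cycles_through_and_avoiding_chord_disjoint Int_commute by metis
    then show ?thesis using d by blast
  qed
qed

lemma long_cycle_edges_F'_subset:
  "long_cycle_edges V F' \<subseteq> insert {a, x} (long_cycle_edges V F - {{a, b}, {b, x}})"
proof
  fix e assume "e \<in> long_cycle_edges V F'"
  then obtain d where e: "e \<in> F'" and d: "is_cycle V F' d" "4 \<le> length d" "e \<in> cycle_edges d"
    unfolding long_cycle_edges_def by blast
  show "e \<in> insert {a, x} (long_cycle_edges V F - {{a, b}, {b, x}})"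
  proof (cases "{a, x} \<in> cycle_edges d")
    case True
    then show ?thesis
      using cycle_edges_F'_cycle_through_chord[OF d(1) True] d(3) b_notin_rest cycle_edges_cycle
        cycle_edges_subset_long_cycle_edges
      by auto
  next
    case False
    then have dF: "is_cycle V F d" using is_cycle_F_if_F'_avoiding_chord d by blast
    moreover have "e \<in> F" using dF d(3) by (auto simp: is_cycle_def)
    ultimately have "e \<in> long_cycle_edges V F"
      unfolding long_cycle_edges_def using d by blast
    moreover have "e \<noteq> {b, x}"
    proof
      assume "e = {b, x}"
      then have "{a, b} \<in> cycle_edges d"
        using cycle_edges_eq_cycle[OF _ dF] d(3) cycle_edges_cycle by auto
      then show False using d(1) ab_notin_F' by (auto simp: is_cycle_def)
    qed
    ultimately show ?thesis using e ab_notin_F' by blast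
  qed
qed

lemma card_long_cycle_edges_F'_less: "card (long_cycle_edges V F') < card (long_cycle_edges V F)"
proof -
  let ?L = "long_cycle_edges V F"
  have fin: "finite ?L" using finite_F unfolding long_cycle_edges_def by simp
  have two: "{{a, b}, {b, x}} \<subseteq> ?L"
    using cycle_edges_subset_long_cycle_edges cycle_edges_cycle by auto
  have "{a, x} \<notin> ?L" using chord_notin_F unfolding long_cycle_edges_def by blast
  moreover have "card {{a, b}, {b, x}} = 2" using distinct_cycle by (auto simp: doubleton_eq_iff)
  ultimately have "card (insert {a, x} (?L - {{a, b}, {b, x}})) < card ?L"
    using fin two card_mono[OF fin two] by (simp add: card_Diff_subset)
  moreover have "card (long_cycle_edges V F') \<le> card (insert {a, x} (?L - {{a, b}, {b, x}}))"
    using fin long_cycle_edges_F'_subset by (intro card_mono) auto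
  ultimately show ?thesis by linarith
qed

end

lemma chordal_spanning_cactus_shorten_long_cycle:
  assumes g: "graph V E" and ch: "chordal V E" and F: "spanning_cactus V E F"
    and c: "is_cycle V F c" and len: "4 \<le> length c"
  obtains F' where "spanning_cactus V E F'" "card F' = card F"
    "card (long_cycle_edges V F') < card (long_cycle_edges V F)"
proof -
  have "F \<subseteq> E" "cactus V F" using F by (auto simp: spanning_cactus_def)
  then have "is_cycle V E c" using c by (auto simp: is_cycle_def)
  then obtain i where i: "i + 2 < length c" "{c ! i, c ! (i + 2)} \<in> E"
    using chordal_cycle_short_chord[OF g ch _ len] by blast
  define l where "l = rotate i c"
  have "Suc (Suc (Suc (Suc 0))) \<le> length l" using len unfolding l_def by simp
  then obtain a b x r where abxr: "rotate i c = a # b # x # r" "r \<noteq> []"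
    unfolding l_def[symmetric] by (auto simp: Suc_le_length_iff)
  have "a = c ! i" "x = c ! (i + 2)"
    using nth_rotate[of 0 c i] nth_rotate[of 2 c i] abxr(1) i(1)
    by (simp_all, fastforce)
  then interpret cactus_chord_exchange V E F a b x r
    using g \<open>cactus V F\<close> \<open>F \<subseteq> E\<close> is_cycle_rotate[OF c, of i] abxr i(2)
    by unfold_locales simp_all
  show thesis
    using that cactus_F' F'_subset card_F' card_long_cycle_edges_F'_less
    by (simp add: spanning_cactus_def)
qed

theorem mainTheorem9:
  fixes V :: "'a set" and E :: "'a set set"
  assumes "graph V E" and "connected_graph V E" and "chordal V E"
  shows "\<exists>F. spanning_cactus V E F \<and>
             (\<forall>F'. spanning_cactus V E F' \<longrightarrow> card F' \<le> card F) \<and>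
             (\<forall>c. is_cycle V F c \<longrightarrow> length c = 3)"
proof -
  have bound: "\<forall>F. spanning_cactus V E F \<longrightarrow> card F < Suc (card E)"
    using graph_finite_edges[OF assms(1)]
    by (auto simp: spanning_cactus_def intro!: le_imp_less_Suc card_mono)
  obtain F1 where "spanning_cactus V E F1" using spanning_cactus_exists[OF assms(1,2)] ..
  then obtain F0 where F0: "spanning_cactus V E F0"
    and max: "\<forall>F. spanning_cactus V E F \<longrightarrow> card F \<le> card F0"
    using Lattices_Big.ex_has_greatest_nat[OF _ bound] by blast
  obtain F where F: "spanning_cactus V E F" "card F = card F0"
    and min: "\<And>G. spanning_cactus V E G \<and> card G = card F0 \<Longrightarrow>
      card (long_cycle_edges V F) \<le> card (long_cycle_edges V G)"
    using ex_has_least_nat[of "\<lambda>F. spanning_cactus V E F \<and> card F = card F0" F0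
        "\<lambda>F. card (long_cycle_edges V F)"] F0 by blast
  have "length c = 3" if c: "is_cycle V F c" for c
  proof (rule ccontr)
    assume "length c \<noteq> 3"
    then have "4 \<le> length c" using c by (auto simp: is_cycle_def)
    then obtain F' where "spanning_cactus V E F'" "card F' = card F"
      "card (long_cycle_edges V F') < card (long_cycle_edges V F)"
      using chordal_spanning_cactus_shorten_long_cycle[OF assms(1,3) F(1) c] by blast
    then show False using min[of F'] F(2) by simp
  qed
  then show ?thesis using F max by auto
qed

end
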